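(* Let $r\ge2$, let $(\mathbb{X},\mathcal{X})$ be a Polish space and $H_0$ a probability measure on $\mathbb{X}$. Define random probability measures $G_i=\sum_{k\ge1}W_{ik}\delta_{\tilde\varphi_{0k}}$, $i=1,\dots,r$, where $(\tilde\varphi_{0k})_{k\ge1}$ is i.i.d. with law $H_0$ (so all $G_i$ share the same atoms), $W_{ik}=S_{ik}\prod_{j<k}(1-S_{ij})$, with $S_k=(S_{1k},\dots,S_{rk})$, $k\ge1$, i.i.d. random vectors in $[0,1]^r$ independent of $(\tilde\varphi_{0k})_k$ and such that $\sum_{k\ge1}W_{ik}=1$ a.s. for every $i$. Then for every measurable $A\subseteq\mathbb{X}$ with $0<H_0(A)<1$, \[ \mathrm{Cor}(G_1(A),G_2(A))=C_{1,2}:=\frac{\mathbb{E}[S_{11}S_{21}]}{1-\mathbb{E}[(1-S_{11})(1-S_{21})]}\sqrt{\frac{(2\mathbb{E}[S_{11}]-\mathbb{E}[S_{11}^2])(2\mathbb{E}[S_{21}]-\mathbb{E}[S_{21}^2])}{\mathbb{E}[S_{11}^2]\,\mathbb{E}[S_{21}^2]}}. \]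
   Context: $\delta_x$ is the Dirac mass at $x$; empty products equal $1$. *)

theory Defs
  imports "HOL-Probability.Probability"
begin

definition covar :: "'a measure \<Rightarrow> ('a \<Rightarrow> real) \<Rightarrow> ('a \<Rightarrow> real) \<Rightarrow> real" where
  "covar M X Y = integral\<^sup>L M (\<lambda>\<omega>. (X \<omega> - integral\<^sup>L M X) * (Y \<omega> - integral\<^sup>L M Y))"

definition cor :: "'a measure \<Rightarrow> ('a \<Rightarrow> real) \<Rightarrow> ('a \<Rightarrow> real) \<Rightarrow> real" where
  "cor M X Y = covar M X Y / (sqrt (covar M X X) * sqrt (covar M Y Y))"

text \<open>Stick-breaking weights (0-based atom index k): W i k = S i k * prod_{j<k} (1 - S i j).\<close>
definition sb_weight :: "(nat \<Rightarrow> nat \<Rightarrow> 'a \<Rightarrow> real) \<Rightarrow> nat \<Rightarrow> nat \<Rightarrow> 'a \<Rightarrow> real" where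
  "sb_weight S i k \<omega> = S i k \<omega> * (\<Prod>j<k. 1 - S i j \<omega>)"

definition G_meas :: "(nat \<Rightarrow> nat \<Rightarrow> 'a \<Rightarrow> real) \<Rightarrow> (nat \<Rightarrow> 'a \<Rightarrow> 'x) \<Rightarrow> nat \<Rightarrow> 'a \<Rightarrow> 'x set \<Rightarrow> real" where
  "G_meas S phi i \<omega> A = (\<Sum>k. sb_weight S i k \<omega> * indicator A (phi k \<omega>))"

end

theory Submission
  imports Defs
begin

text \<open>The indicators \<open>1\<^sub>A(\<phi>\<^sub>k)\<close> are i.i.d. Bernoulli(p), \<open>p = H\<^sub>0(A)\<close>, and
  independent of the weights, so \<open>E G_i(A) = p\<close> and
  \<open>E[G_i(A) G_j(A)] = p\<^sup>2 + (p - p\<^sup>2) \<Sum>\<^sub>k E[W\<^sub>i\<^sub>k W\<^sub>j\<^sub>k]\<close>.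
  Since the stick vectors are i.i.d., \<open>E[W\<^sub>i\<^sub>k W\<^sub>j\<^sub>k] = a q\<^sup>k\<close> with \<open>a = E[S\<^sub>i\<^sub>1 S\<^sub>j\<^sub>1]\<close> and
  \<open>q = E[(1 - S\<^sub>i\<^sub>1)(1 - S\<^sub>j\<^sub>1)]\<close>; hence \<open>Cov(G_i(A), G_j(A)) = p(1 - p) a / (1 - q)\<close>, and the factor
  \<open>p(1 - p)\<close> cancels in the correlation. All series have nonnegative terms, so the exchanges of
  sum and expectation are instances of monotone convergence.\<close>

lemma sums_integral_nonneg:
  fixes f :: "nat \<Rightarrow> 'a \<Rightarrow> real"
  assumes f[measurable]: "\<And>k. f k \<in> borel_measurable M"
    and nonneg: "\<And>k. AE x in M. 0 \<le> f k x"
    and sums: "AE x in M. (\<lambda>k. f k x) sums g x"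
    and g: "integrable M g"
  shows "(\<lambda>k. \<integral>x. f k x \<partial>M) sums (\<integral>x. g x \<partial>M)"
proof -
  have "AE x in M. \<forall>k. 0 \<le> f k x"
    using nonneg by (simp add: AE_all_countable)
  with sums have terms_le: "AE x in M. \<forall>k. 0 \<le> f k x \<and> f k x \<le> g x"
  proof eventually_elim
    case (elim x)
    show ?case
    proof (intro allI conjI)
      fix k
      show "0 \<le> f k x" using elim(2) by blast
      show "f k x \<le> g x"
        by (rule sums_le[OF _ sums_single[of k "\<lambda>_. f k x"] elim(1)]) (use elim(2) in auto)
    qed
  qed
  have int_f: "integrable M (f k)" for k
    by (rule Bochner_Integration.integrable_bound[OF g])
       (use terms_le in \<open>auto elim!: eventually_mono intro: order_trans[OF _ abs_ge_self]\<close>)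
  have g_nonneg: "AE x in M. 0 \<le> g x"
    using terms_le by eventually_elim (use order_trans in blast)
  have "ennreal (\<integral>x. g x \<partial>M) = (\<integral>\<^sup>+x. ennreal (g x) \<partial>M)"
    using nn_integral_eq_integral[OF g g_nonneg] by simp
  also have "\<dots> = (\<integral>\<^sup>+x. (\<Sum>k. ennreal (f k x)) \<partial>M)"
  proof (rule nn_integral_cong_AE)
    show "AE x in M. ennreal (g x) = (\<Sum>k. ennreal (f k x))"
      using sums terms_le by eventually_elim (simp add: sums_iff suminf_ennreal2)
  qed
  also have "\<dots> = (\<Sum>k. \<integral>\<^sup>+x. ennreal (f k x) \<partial>M)"
    by (rule nn_integral_suminf) measurable
  also have "\<dots> = (\<Sum>k. ennreal (\<integral>x. f k x \<partial>M))"
    using nn_integral_eq_integral[OF int_f nonneg] by simp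
  finally have "(\<lambda>k. ennreal (\<integral>x. f k x \<partial>M)) sums ennreal (\<integral>x. g x \<partial>M)"
    by (metis summableI summable_sums)
  then show ?thesis
    using integral_nonneg_AE[OF nonneg] integral_nonneg_AE[OF g_nonneg] by simp
qed

lemma (in prob_space) covar_eq_integral_mult_diff:
  assumes U: "integrable M U" and V: "integrable M V" and UV: "integrable M (\<lambda>\<omega>. U \<omega> * V \<omega>)"
  shows "covar M U V = (\<integral>\<omega>. U \<omega> * V \<omega> \<partial>M) - (\<integral>\<omega>. U \<omega> \<partial>M) * (\<integral>\<omega>. V \<omega> \<partial>M)"
proof -
  define u v where "u = (\<integral>\<omega>. U \<omega> \<partial>M)" and "v = (\<integral>\<omega>. V \<omega> \<partial>M)"
  have "(\<lambda>\<omega>. (U \<omega> - u) * (V \<omega> - v)) = (\<lambda>\<omega>. U \<omega> * V \<omega> - (v * U \<omega> + u * V \<omega> - u * v))"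
    by (simp add: fun_eq_iff algebra_simps)
  then have "covar M U V = (\<integral>\<omega>. U \<omega> * V \<omega> - (v * U \<omega> + u * V \<omega> - u * v) \<partial>M)"
    by (simp add: covar_def u_def v_def)
  also have "\<dots> = (\<integral>\<omega>. U \<omega> * V \<omega> \<partial>M) - u * v"
    using U V UV by (simp add: prob_space u_def v_def)
  finally show ?thesis by (simp add: u_def v_def)
qed

lemma cor_eq_of_covar:
  fixes d c s1 s2 D1 D2 :: real
  assumes "covar M X Y = d * c" "covar M X X = d * (s1 / D1)" "covar M Y Y = d * (s2 / D2)"
    and "d > 0" "s1 > 0" "s2 > 0" "D1 > 0" "D2 > 0"
  shows "cor M X Y = c * sqrt (D1 * D2 / (s1 * s2))"
proof -
  have "sqrt (covar M X X) * sqrt (covar M Y Y) = sqrt (d\<^sup>2 * (s1 * s2 / (D1 * D2)))"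
    by (simp add: assms(2,3) power2_eq_square real_sqrt_mult[symmetric] field_simps)
  also have "\<dots> = d * (sqrt (s1 * s2) / sqrt (D1 * D2))"
    using assms(4) by (simp add: real_sqrt_mult real_sqrt_divide)
  finally have "cor M X Y = d * c / (d * (sqrt (s1 * s2) / sqrt (D1 * D2)))"
    by (simp add: cor_def assms(1))
  moreover have "sqrt (s1 * s2) > 0" "sqrt (D1 * D2) > 0"
    using assms by simp_all
  ultimately show ?thesis
    using assms(4) by (simp add: real_sqrt_divide)
qed

lemma vimage_comp_subset:
  assumes X: "X \<in> M \<rightarrow>\<^sub>M N" and f: "f \<in> N \<rightarrow>\<^sub>M L"
  shows "{(\<lambda>\<omega>. f (X \<omega>)) -` C \<inter> space M | C. C \<in> sets L} \<subseteq> {X -` B \<inter> space M | B. B \<in> sets N}"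
proof safe
  fix C
  assume C: "C \<in> sets L"
  show "\<exists>B. (\<lambda>\<omega>. f (X \<omega>)) -` C \<inter> space M = X -` B \<inter> space M \<and> B \<in> sets N"
  proof (intro exI conjI)
    show "(\<lambda>\<omega>. f (X \<omega>)) -` C \<inter> space M = X -` (f -` C \<inter> space N) \<inter> space M"
      using measurable_space[OF X] by auto
    show "f -` C \<inter> space N \<in> sets N"
      using measurable_sets[OF f C] .
  qed
qed

lemma (in prob_space) indep_var_compose_indep_set:
  assumes indep: "indep_set {X -` B \<inter> space M | B. B \<in> sets N1} {Y -` B \<inter> space M | B. B \<in> sets N2}"
    and X: "X \<in> M \<rightarrow>\<^sub>M N1" and Y: "Y \<in> M \<rightarrow>\<^sub>M N2"
    and f: "f \<in> N1 \<rightarrow>\<^sub>M L1" and g: "g \<in> N2 \<rightarrow>\<^sub>M L2"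
  shows "indep_var L1 (\<lambda>\<omega>. f (X \<omega>)) L2 (\<lambda>\<omega>. g (Y \<omega>))"
  unfolding indep_var_def indep_vars_def2
proof
  show "\<forall>b\<in>UNIV. case_bool (\<lambda>\<omega>. f (X \<omega>)) (\<lambda>\<omega>. g (Y \<omega>)) b \<in> M \<rightarrow>\<^sub>M case_bool L1 L2 b"
    using measurable_compose[OF X f] measurable_compose[OF Y g] by (simp split: bool.split)
  show "indep_sets (\<lambda>b. {case_bool (\<lambda>\<omega>. f (X \<omega>)) (\<lambda>\<omega>. g (Y \<omega>)) b -` C \<inter> space M | C.
      C \<in> sets (case_bool L1 L2 b)}) UNIV"
    using indep unfolding indep_set_def
    by (rule indep_sets_mono_sets)
       (use vimage_comp_subset[OF X f] vimage_comp_subset[OF Y g] in \<open>auto split: bool.split\<close>)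
qed

lemma (in finite_measure) integrable_unit_valued:
  fixes h :: "'a \<Rightarrow> real"
  assumes "h \<in> borel_measurable M" and "AE x in M. 0 \<le> h x \<and> h x \<le> 1"
  shows "integrable M h"
proof (rule integrable_const_bound[where B=1])
  show "AE x in M. norm (h x) \<le> 1"
    using assms(2) by eventually_elim simp
qed (rule assms(1))

locale common_atoms_stick_breaking =
  fixes M :: "'a measure" and H0 :: "'x::polish_space measure"
    and r :: nat and S :: "nat \<Rightarrow> nat \<Rightarrow> 'a \<Rightarrow> real" and phi :: "nat \<Rightarrow> 'a \<Rightarrow> 'x"
    and A :: "'x set"
  assumes M: "prob_space M"
    and r: "r \<ge> 2"
    and H0: "prob_space H0" "sets H0 = sets borel"
    and phi_indep: "prob_space.indep_vars M (\<lambda>_. borel) phi UNIV"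
    and phi_law: "\<And>k. distr M borel (phi k) = H0"
    and S_range: "\<And>i k \<omega>. i \<in> {1..r} \<Longrightarrow> \<omega> \<in> space M \<Longrightarrow> S i k \<omega> \<in> {0..1}"
    and S_indep: "prob_space.indep_vars M (\<lambda>_. PiM {1..r} (\<lambda>_. borel))
                    (\<lambda>k \<omega>. restrict (\<lambda>i. S i k \<omega>) {1..r}) UNIV"
    and S_ident: "\<And>k. distr M (PiM {1..r} (\<lambda>_. borel)) (\<lambda>\<omega>. restrict (\<lambda>i. S i k \<omega>) {1..r})
                     = distr M (PiM {1..r} (\<lambda>_. borel)) (\<lambda>\<omega>. restrict (\<lambda>i. S i 0 \<omega>) {1..r})"
    and S_phi_indep: "prob_space.indep_set M
          {(\<lambda>\<omega> k. restrict (\<lambda>i. S i k \<omega>) {1..r}) -` B \<inter> space M | B.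
              B \<in> sets (PiM UNIV (\<lambda>_. PiM {1..r} (\<lambda>_. borel)))}
          {(\<lambda>\<omega> k. phi k \<omega>) -` B \<inter> space M | B. B \<in> sets (PiM UNIV (\<lambda>_. borel))}"
    and W_sum: "\<And>i. i \<in> {1..r} \<Longrightarrow> AE \<omega> in M. (\<lambda>k. sb_weight S i k \<omega>) sums 1"
    and A: "A \<in> sets borel" "0 < measure H0 A" "measure H0 A < 1"

sublocale common_atoms_stick_breaking \<subseteq> prob_space M by (rule M)

context common_atoms_stick_breaking
begin

abbreviation "Stick \<equiv> PiM {1..r} (\<lambda>_. borel :: real measure)"
abbreviation "Sticks \<equiv> PiM UNIV (\<lambda>_::nat. Stick)"
abbreviation "Atoms \<equiv> PiM UNIV (\<lambda>_::nat. borel :: 'x measure)"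

abbreviation "W i k \<equiv> sb_weight S i k"
abbreviation "G i \<omega> \<equiv> G_meas S phi i \<omega> A"

definition stick :: "nat \<Rightarrow> 'a \<Rightarrow> nat \<Rightarrow> real" where
  "stick k \<omega> = restrict (\<lambda>i. S i k \<omega>) {1..r}"

definition sticks :: "'a \<Rightarrow> nat \<Rightarrow> nat \<Rightarrow> real" where
  "sticks \<omega> = (\<lambda>k. stick k \<omega>)"

definition atoms :: "'a \<Rightarrow> nat \<Rightarrow> 'x" where
  "atoms \<omega> = (\<lambda>k. phi k \<omega>)"

text \<open>The weights and indicators as functions of the whole sequence of stick vectors, resp. atoms,
  so that the independence hypothesis \<open>S_phi_indep\<close> applies to them.\<close>

definition seq_weight :: "nat \<Rightarrow> nat \<Rightarrow> (nat \<Rightarrow> nat \<Rightarrow> real) \<Rightarrow> real" where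
  "seq_weight i k \<sigma> = \<sigma> k i * (\<Prod>j<k. 1 - \<sigma> j i)"

definition seq_hit :: "nat \<Rightarrow> (nat \<Rightarrow> 'x) \<Rightarrow> real" where
  "seq_hit k \<psi> = indicator A (\<psi> k)"

definition hit :: "nat \<Rightarrow> 'a \<Rightarrow> real" where
  "hit k \<omega> = indicator A (phi k \<omega>)"

definition p :: real where
  "p = measure H0 A"

lemma stick_measurable[measurable]: "stick k \<in> M \<rightarrow>\<^sub>M Stick"
  using S_indep unfolding indep_vars_def2 stick_def by auto

lemma phi_measurable[measurable]: "phi k \<in> borel_measurable M"
  using phi_indep unfolding indep_vars_def2 by auto

lemma S_measurable[measurable]: "i \<in> {1..r} \<Longrightarrow> S i k \<in> borel_measurable M"
proof -
  assume i: "i \<in> {1..r}"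
  have "(\<lambda>\<omega>. stick k \<omega> i) \<in> borel_measurable M"
    using i by measurable
  then show ?thesis
    using i by (simp add: stick_def)
qed

lemma sticks_measurable[measurable]: "sticks \<in> M \<rightarrow>\<^sub>M Sticks"
proof -
  have "(\<lambda>\<omega>. \<lambda>k\<in>UNIV. stick k \<omega>) \<in> M \<rightarrow>\<^sub>M Sticks"
    by measurable
  then show ?thesis
    by (simp add: sticks_def[abs_def] restrict_UNIV)
qed

lemma atoms_measurable[measurable]: "atoms \<in> M \<rightarrow>\<^sub>M Atoms"
proof -
  have "(\<lambda>\<omega>. \<lambda>k\<in>UNIV. phi k \<omega>) \<in> M \<rightarrow>\<^sub>M Atoms"
    by measurable
  then show ?thesis
    by (simp add: atoms_def[abs_def] restrict_UNIV)
qed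

lemma Sticks_component_measurable[measurable]:
  "i \<in> {1..r} \<Longrightarrow> (\<lambda>\<sigma>. \<sigma> k i) \<in> borel_measurable Sticks"
proof -
  assume i: "i \<in> {1..r}"
  have "(\<lambda>\<sigma>. \<sigma> k) \<in> Sticks \<rightarrow>\<^sub>M Stick"
    by (rule measurable_component_singleton) simp
  then show ?thesis
    by (rule measurable_compose) (rule measurable_component_singleton, rule i)
qed

lemma seq_weight_measurable[measurable]: "i \<in> {1..r} \<Longrightarrow> seq_weight i k \<in> borel_measurable Sticks"
  unfolding seq_weight_def by measurable

lemma seq_hit_measurable[measurable]: "seq_hit k \<in> borel_measurable Atoms"
  unfolding seq_hit_def using A(1) by measurable

lemma sb_weight_eq_seq_weight: "i \<in> {1..r} \<Longrightarrow> W i k \<omega> = seq_weight i k (sticks \<omega>)"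
  by (simp add: sb_weight_def seq_weight_def sticks_def stick_def)

lemma hit_eq_seq_hit: "hit k \<omega> = seq_hit k (atoms \<omega>)"
  by (simp add: hit_def seq_hit_def atoms_def)

lemma sb_weight_measurable[measurable]: "i \<in> {1..r} \<Longrightarrow> W i k \<in> borel_measurable M"
proof -
  assume i: "i \<in> {1..r}"
  have "(\<lambda>\<omega>. seq_weight i k (sticks \<omega>)) \<in> borel_measurable M"
    using i by measurable
  then show ?thesis
    by (simp add: sb_weight_eq_seq_weight[OF i, symmetric])
qed

lemma hit_measurable[measurable]: "hit k \<in> borel_measurable M"
  unfolding hit_def using A(1) by measurable

lemma S_bounds: "i \<in> {1..r} \<Longrightarrow> \<omega> \<in> space M \<Longrightarrow> 0 \<le> S i k \<omega> \<and> S i k \<omega> \<le> 1"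
  using S_range by auto

lemma sb_weight_bounds: "i \<in> {1..r} \<Longrightarrow> \<omega> \<in> space M \<Longrightarrow> 0 \<le> W i k \<omega> \<and> W i k \<omega> \<le> 1"
  using S_bounds unfolding sb_weight_def
  by (auto intro!: mult_nonneg_nonneg prod_nonneg mult_le_one prod_le_1)

lemma hit_bounds: "0 \<le> hit k \<omega> \<and> hit k \<omega> \<le> 1"
  by (simp add: hit_def)

lemma integral_sticks_mult_atoms:
  fixes f :: "(nat \<Rightarrow> nat \<Rightarrow> real) \<Rightarrow> real" and g :: "(nat \<Rightarrow> 'x) \<Rightarrow> real"
  assumes "f \<in> borel_measurable Sticks" "g \<in> borel_measurable Atoms"
    and "integrable M (\<lambda>\<omega>. f (sticks \<omega>))" "integrable M (\<lambda>\<omega>. g (atoms \<omega>))"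
  shows "(\<integral>\<omega>. f (sticks \<omega>) * g (atoms \<omega>) \<partial>M) = (\<integral>\<omega>. f (sticks \<omega>) \<partial>M) * (\<integral>\<omega>. g (atoms \<omega>) \<partial>M)"
proof (rule indep_var_lebesgue_integral[OF indep_var_compose_indep_set[where X=sticks and Y=atoms]])
  show "indep_set {sticks -` B \<inter> space M |B. B \<in> sets Sticks} {atoms -` B \<inter> space M |B. B \<in> sets Atoms}"
    using S_phi_indep unfolding sticks_def[abs_def] stick_def atoms_def[abs_def] .
qed (rule assms sticks_measurable atoms_measurable)+

lemma integral_stick_eq:
  fixes g :: "(nat \<Rightarrow> real) \<Rightarrow> real"
  assumes "g \<in> borel_measurable Stick"
  shows "(\<integral>\<omega>. g (stick k \<omega>) \<partial>M) = (\<integral>\<omega>. g (stick 0 \<omega>) \<partial>M)"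
proof -
  have "distr M Stick (stick k) = distr M Stick (stick 0)"
    using S_ident[of k] by (simp add: stick_def[abs_def])
  then show ?thesis
    using integral_distr[OF stick_measurable assms] by metis
qed

lemma integral_hit: "(\<integral>\<omega>. hit k \<omega> \<partial>M) = p"
proof -
  have "(\<integral>\<omega>. hit k \<omega> \<partial>M) = (\<integral>y. indicator A y \<partial>distr M borel (phi k))"
    unfolding hit_def using A(1) by (intro integral_distr[symmetric]) auto
  also have "\<dots> = measure H0 A"
    using A(1) H0(2) by (simp add: phi_law)
  finally show ?thesis
    by (simp add: p_def)
qed

lemma integral_hit_mult: "(\<integral>\<omega>. hit k \<omega> * hit l \<omega> \<partial>M) = (if k = l then p else p\<^sup>2)"
proof (cases "k = l")
  case True
  have "(\<lambda>\<omega>. hit k \<omega> * hit l \<omega>) = hit k"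
    using True by (simp add: fun_eq_iff hit_def indicator_def)
  with True show ?thesis
    by (simp add: integral_hit)
next
  case False
  have "indep_vars (\<lambda>_. borel) hit UNIV"
    using indep_vars_compose2[OF phi_indep, of "\<lambda>_ x. indicator A x :: real" "\<lambda>_. borel"] A(1)
    by (simp add: hit_def[abs_def])
  then have "indep_vars (\<lambda>_. borel) hit {k, l}"
    by (rule indep_vars_subset) simp
  then have "(\<integral>\<omega>. (\<Prod>m\<in>{k, l}. hit m \<omega>) \<partial>M) = (\<Prod>m\<in>{k, l}. \<integral>\<omega>. hit m \<omega> \<partial>M)"
    by (intro indep_vars_lebesgue_integral)
       (use hit_bounds in \<open>auto intro!: integrable_const_bound[where B=1] AE_I2\<close>)
  with False show ?thesis
    by (simp add: integral_hit power2_eq_square)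
qed

lemma integral_sb_weight_mult_same_atom:
  assumes i: "i \<in> {1..r}" and j: "j \<in> {1..r}"
  shows "(\<integral>\<omega>. W i k \<omega> * W j k \<omega> \<partial>M) =
    (\<integral>\<omega>. S i 0 \<omega> * S j 0 \<omega> \<partial>M) * (\<integral>\<omega>. (1 - S i 0 \<omega>) * (1 - S j 0 \<omega>) \<partial>M) ^ k"
proof -
  txt \<open>\<open>W i k * W j k\<close> is a product over \<open>m \<le> k\<close> of functions of the independent,
    identically distributed stick vectors.\<close>
  define h where "h m y = (if m = k then y i * y j else (1 - y i) * (1 - y j))" for m and y :: "nat \<Rightarrow> real"
  have h_measurable[measurable]: "h m \<in> borel_measurable Stick" for m
    unfolding h_def using i j by measurable
  have h_stick: "h m (stick n \<omega>) = (if m = k then S i n \<omega> * S j n \<omega> else (1 - S i n \<omega>) * (1 - S j n \<omega>))"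
    for m n \<omega>
    using i j by (simp add: h_def stick_def)
  have "indep_vars (\<lambda>_. borel) (\<lambda>m \<omega>. h m (stick m \<omega>)) UNIV"
    using indep_vars_compose2[OF S_indep, of h "\<lambda>_. borel"] h_measurable by (simp add: stick_def[abs_def])
  then have "indep_vars (\<lambda>_. borel) (\<lambda>m \<omega>. h m (stick m \<omega>)) {..k}"
    by (rule indep_vars_subset) simp
  then have "(\<integral>\<omega>. (\<Prod>m\<le>k. h m (stick m \<omega>)) \<partial>M) = (\<Prod>m\<le>k. \<integral>\<omega>. h m (stick m \<omega>) \<partial>M)"
    by (rule indep_vars_lebesgue_integral[rotated])
       (use S_bounds[OF i] S_bounds[OF j] i j in
         \<open>auto simp: h_stick abs_mult intro!: integrable_const_bound[where B=1] AE_I2 mult_le_one\<close>)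
  also have "\<dots> = (\<Prod>m\<le>k. \<integral>\<omega>. h m (stick 0 \<omega>) \<partial>M)"
    by (intro prod.cong refl integral_stick_eq h_measurable)
  also have "\<dots> = (\<integral>\<omega>. S i 0 \<omega> * S j 0 \<omega> \<partial>M) * (\<integral>\<omega>. (1 - S i 0 \<omega>) * (1 - S j 0 \<omega>) \<partial>M) ^ k"
    by (simp add: h_stick flip: lessThan_Suc_atMost)
  also have "(\<lambda>\<omega>. \<Prod>m\<le>k. h m (stick m \<omega>)) = (\<lambda>\<omega>. W i k \<omega> * W j k \<omega>)"
    by (simp add: fun_eq_iff h_stick sb_weight_def prod.distrib flip: lessThan_Suc_atMost)
  finally show ?thesis .
qed

lemma integral_sb_weights_mult_hits:
  assumes i: "i \<in> {1..r}" and j: "j \<in> {1..r}"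
  shows "(\<integral>\<omega>. W i k \<omega> * W j l \<omega> * (hit k \<omega> * hit l \<omega>) \<partial>M) =
    (\<integral>\<omega>. W i k \<omega> * W j l \<omega> \<partial>M) * (if k = l then p else p\<^sup>2)"
proof -
  have "(\<integral>\<omega>. seq_weight i k (sticks \<omega>) * seq_weight j l (sticks \<omega>) *
      (seq_hit k (atoms \<omega>) * seq_hit l (atoms \<omega>)) \<partial>M) =
    (\<integral>\<omega>. seq_weight i k (sticks \<omega>) * seq_weight j l (sticks \<omega>) \<partial>M) *
      (\<integral>\<omega>. seq_hit k (atoms \<omega>) * seq_hit l (atoms \<omega>) \<partial>M)"
  proof (rule integral_sticks_mult_atoms)
    show "(\<lambda>\<sigma>. seq_weight i k \<sigma> * seq_weight j l \<sigma>) \<in> borel_measurable Sticks"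
      using i j by measurable
  qed (use i j sb_weight_bounds[OF i] sb_weight_bounds[OF j] hit_bounds in
      \<open>auto simp: abs_mult sb_weight_eq_seq_weight[symmetric] hit_eq_seq_hit[symmetric]
         intro!: integrable_const_bound[where B=1] AE_I2 mult_le_one\<close>)
  then show ?thesis
    by (simp add: sb_weight_eq_seq_weight[OF i] sb_weight_eq_seq_weight[OF j] hit_eq_seq_hit
        integral_hit_mult[unfolded hit_eq_seq_hit])
qed

lemma integral_sb_weight_mult_hit:
  assumes i: "i \<in> {1..r}"
  shows "(\<integral>\<omega>. W i k \<omega> * hit k \<omega> \<partial>M) = (\<integral>\<omega>. W i k \<omega> \<partial>M) * p"
proof -
  have "(\<integral>\<omega>. seq_weight i k (sticks \<omega>) * seq_hit k (atoms \<omega>) \<partial>M) =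
    (\<integral>\<omega>. seq_weight i k (sticks \<omega>) \<partial>M) * (\<integral>\<omega>. seq_hit k (atoms \<omega>) \<partial>M)"
  proof (rule integral_sticks_mult_atoms)
    show "seq_weight i k \<in> borel_measurable Sticks"
      using i by measurable
  qed (use i sb_weight_bounds[OF i] hit_bounds in
      \<open>auto simp: sb_weight_eq_seq_weight[symmetric] hit_eq_seq_hit[symmetric]
         intro!: integrable_const_bound[where B=1] AE_I2\<close>)
  then show ?thesis
    by (simp add: sb_weight_eq_seq_weight[OF i] hit_eq_seq_hit integral_hit[unfolded hit_eq_seq_hit])
qed

lemma G_sums:
  assumes i: "i \<in> {1..r}"
  shows "AE \<omega> in M. (\<lambda>k. W i k \<omega> * hit k \<omega>) sums G i \<omega> \<and> 0 \<le> G i \<omega> \<and> G i \<omega> \<le> 1"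
  using W_sum[OF i] AE_space
proof eventually_elim
  case (elim \<omega>)
  have nonneg: "0 \<le> W i k \<omega> * hit k \<omega>" for k
    using sb_weight_bounds[OF i elim(2)] hit_bounds[of k \<omega>] by simp
  have le: "W i k \<omega> * hit k \<omega> \<le> W i k \<omega>" for k
    using sb_weight_bounds[OF i elim(2)] hit_bounds[of k \<omega>] by (simp add: mult_left_le)
  have "summable (\<lambda>k. W i k \<omega>)"
    using elim(1) by (rule sums_summable)
  then have "summable (\<lambda>k. W i k \<omega> * hit k \<omega>)"
    by (rule summable_comparison_test') (use nonneg le in simp)
  then have sums: "(\<lambda>k. W i k \<omega> * hit k \<omega>) sums G i \<omega>"
    unfolding G_meas_def hit_def[symmetric] by (rule summable_sums)
  have "0 \<le> G i \<omega>"
    by (rule sums_le[OF nonneg sums_zero sums])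
  moreover have "G i \<omega> \<le> 1"
    by (rule sums_le[OF le sums elim(1)])
  ultimately show ?case
    using sums by simp
qed

lemma G_measurable[measurable]: "i \<in> {1..r} \<Longrightarrow> (\<lambda>\<omega>. G i \<omega>) \<in> borel_measurable M"
  unfolding G_meas_def hit_def[symmetric] by measurable

lemma integrable_G:
  assumes i: "i \<in> {1..r}"
  shows "integrable M (\<lambda>\<omega>. G i \<omega>)"
proof (rule integrable_unit_valued)
  show "AE \<omega> in M. 0 \<le> G i \<omega> \<and> G i \<omega> \<le> 1"
    using G_sums[OF i] by eventually_elim simp
qed (use i in measurable)

lemma integrable_G_mult:
  assumes i: "i \<in> {1..r}" and j: "j \<in> {1..r}"
  shows "integrable M (\<lambda>\<omega>. G i \<omega> * G j \<omega>)"
proof (rule integrable_unit_valued)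
  show "AE \<omega> in M. 0 \<le> G i \<omega> * G j \<omega> \<and> G i \<omega> * G j \<omega> \<le> 1"
    using G_sums[OF i] G_sums[OF j] by eventually_elim (auto intro: mult_le_one)
qed (use i j in measurable)

lemma sums_integral_sb_weight:
  assumes i: "i \<in> {1..r}"
  shows "(\<lambda>k. \<integral>\<omega>. W i k \<omega> \<partial>M) sums 1"
  using sums_integral_nonneg[of "W i" M "\<lambda>_. 1"] W_sum[OF i] sb_weight_bounds[OF i] i
  by (auto intro: AE_I2 simp: prob_space)

lemma integral_G:
  assumes i: "i \<in> {1..r}"
  shows "(\<integral>\<omega>. G i \<omega> \<partial>M) = p"
proof -
  have "(\<lambda>k. \<integral>\<omega>. W i k \<omega> * hit k \<omega> \<partial>M) sums (\<integral>\<omega>. G i \<omega> \<partial>M)"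
  proof (rule sums_integral_nonneg)
    show "AE \<omega> in M. (\<lambda>k. W i k \<omega> * hit k \<omega>) sums G i \<omega>"
      using G_sums[OF i] by eventually_elim simp
    show "integrable M (\<lambda>\<omega>. G i \<omega>)"
      by (rule integrable_G[OF i])
  qed (use i sb_weight_bounds[OF i] hit_bounds in \<open>auto intro!: AE_I2\<close>)
  moreover have "(\<lambda>k. \<integral>\<omega>. W i k \<omega> * hit k \<omega> \<partial>M) sums p"
    using sums_mult2[OF sums_integral_sb_weight[OF i], of p] by (simp add: integral_sb_weight_mult_hit[OF i])
  ultimately show ?thesis
    by (rule sums_unique2)
qed

lemma integrable_S: "i \<in> {1..r} \<Longrightarrow> integrable M (S i k)"
  by (rule integrable_const_bound[where B=1]) (use S_bounds[of i] in \<open>auto intro!: AE_I2\<close>)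

lemma integrable_S_sq: "i \<in> {1..r} \<Longrightarrow> integrable M (\<lambda>\<omega>. (S i k \<omega>)\<^sup>2)"
  by (rule integrable_const_bound[where B=1])
     (use S_bounds[of i] in \<open>auto intro!: AE_I2 simp: abs_le_iff power2_eq_square intro: mult_le_one\<close>)

lemma integrable_complements_mult:
  "i \<in> {1..r} \<Longrightarrow> j \<in> {1..r} \<Longrightarrow> integrable M (\<lambda>\<omega>. (1 - S i k \<omega>) * (1 - S j k \<omega>))"
  by (rule integrable_const_bound[where B=1])
     (use S_bounds[of i] S_bounds[of j] in \<open>auto intro!: AE_I2 simp: abs_mult intro: mult_le_one\<close>)

lemma integral_S_pos:
  assumes i: "i \<in> {1..r}"
  shows "0 < (\<integral>\<omega>. S i 0 \<omega> \<partial>M)"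
proof (rule ccontr)
  txt \<open>Otherwise all sticks \<open>S i k\<close> vanish almost surely and the weights cannot sum to 1.\<close>
  assume "\<not> 0 < (\<integral>\<omega>. S i 0 \<omega> \<partial>M)"
  moreover have "(\<integral>\<omega>. S i k \<omega> \<partial>M) = (\<integral>\<omega>. S i 0 \<omega> \<partial>M)" for k
    using integral_stick_eq[of "\<lambda>y. y i" k] i by (simp add: stick_def)
  moreover have "0 \<le> (\<integral>\<omega>. S i k \<omega> \<partial>M)" for k
    using S_bounds[OF i] by (intro integral_nonneg_AE AE_I2) auto
  ultimately have "(\<integral>\<omega>. S i k \<omega> \<partial>M) = 0" for k
    by (metis order_less_le)
  then have "AE \<omega> in M. S i k \<omega> = 0" for k
    using integral_nonneg_eq_0_iff_AE[OF integrable_S[OF i]] S_bounds[OF i] by (auto intro: AE_I2)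
  then have "AE \<omega> in M. \<forall>k. S i k \<omega> = 0"
    by (simp add: AE_all_countable)
  then have "AE \<omega> in M. False"
    using W_sum[OF i]
  proof eventually_elim
    case (elim \<omega>)
    then have "(\<lambda>k. 0::real) sums 1"
      by (simp add: sb_weight_def)
    then show False
      using sums_zero sums_unique2 by fastforce
  qed
  then show False
    by (simp add: AE_False)
qed

lemma integral_S_sq_le: "i \<in> {1..r} \<Longrightarrow> (\<integral>\<omega>. (S i 0 \<omega>)\<^sup>2 \<partial>M) \<le> (\<integral>\<omega>. S i 0 \<omega> \<partial>M)"
  by (rule integral_mono[OF integrable_S_sq integrable_S])
     (use S_bounds[of i] in \<open>auto simp: power2_eq_square intro: mult_left_le\<close>)

lemma integral_S_sq_pos:
  assumes i: "i \<in> {1..r}"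
  shows "0 < (\<integral>\<omega>. (S i 0 \<omega>)\<^sup>2 \<partial>M)"
proof (rule ccontr)
  assume "\<not> 0 < (\<integral>\<omega>. (S i 0 \<omega>)\<^sup>2 \<partial>M)"
  then have "(\<integral>\<omega>. (S i 0 \<omega>)\<^sup>2 \<partial>M) = 0"
    by (simp add: integral_nonneg_AE order_less_le)
  then have "AE \<omega> in M. S i 0 \<omega> = 0"
    using integral_nonneg_eq_0_iff_AE[OF integrable_S_sq[OF i, of 0]] by auto
  then have "(\<integral>\<omega>. S i 0 \<omega> \<partial>M) = 0"
    by (simp add: integral_eq_zero_AE)
  then show False
    using integral_S_pos[OF i] by simp
qed

lemma integral_complements_mult_lt_1:
  assumes i: "i \<in> {1..r}" and j: "j \<in> {1..r}"
  shows "(\<integral>\<omega>. (1 - S i 0 \<omega>) * (1 - S j 0 \<omega>) \<partial>M) < 1"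
proof -
  have "(\<integral>\<omega>. (1 - S i 0 \<omega>) * (1 - S j 0 \<omega>) \<partial>M) \<le> (\<integral>\<omega>. 1 - S i 0 \<omega> \<partial>M)"
    using S_bounds[OF i] S_bounds[OF j] integrable_S[OF i]
    by (intro integral_mono integrable_complements_mult[OF i j]) (auto intro: mult_left_le)
  also have "\<dots> = 1 - (\<integral>\<omega>. S i 0 \<omega> \<partial>M)"
    using integrable_S[OF i] by (simp add: prob_space)
  finally show ?thesis
    using integral_S_pos[OF i] by simp
qed

lemma one_minus_integral_complement_sq:
  assumes i: "i \<in> {1..r}"
  shows "1 - (\<integral>\<omega>. (1 - S i 0 \<omega>) * (1 - S i 0 \<omega>) \<partial>M) =
    2 * (\<integral>\<omega>. S i 0 \<omega> \<partial>M) - (\<integral>\<omega>. (S i 0 \<omega>)\<^sup>2 \<partial>M)"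
proof -
  have "(\<lambda>\<omega>. (1 - S i 0 \<omega>) * (1 - S i 0 \<omega>)) = (\<lambda>\<omega>. 1 - (2 * S i 0 \<omega> - (S i 0 \<omega>)\<^sup>2))"
    by (simp add: fun_eq_iff power2_eq_square algebra_simps)
  then show ?thesis
    using integrable_S[OF i, of 0] integrable_S_sq[OF i, of 0] by (simp add: prob_space)
qed

lemma sums_integral_sb_weight_mult:
  assumes i: "i \<in> {1..r}" and j: "j \<in> {1..r}"
  shows "(\<lambda>l. \<integral>\<omega>. W i k \<omega> * W j l \<omega> \<partial>M) sums (\<integral>\<omega>. W i k \<omega> \<partial>M)"
proof (rule sums_integral_nonneg)
  show "AE \<omega> in M. (\<lambda>l. W i k \<omega> * W j l \<omega>) sums W i k \<omega>"
    using W_sum[OF j] by eventually_elim (drule sums_mult[of _ 1 "W i k _"], simp)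
  show "integrable M (W i k)"
    using i sb_weight_bounds[OF i] by (intro integrable_unit_valued AE_I2) auto
qed (use i j sb_weight_bounds[OF i] sb_weight_bounds[OF j] in \<open>auto intro!: AE_I2\<close>)

lemma integral_sb_weight_hit_G:
  assumes i: "i \<in> {1..r}" and j: "j \<in> {1..r}"
  shows "(\<integral>\<omega>. W i k \<omega> * hit k \<omega> * G j \<omega> \<partial>M) =
    p\<^sup>2 * (\<integral>\<omega>. W i k \<omega> \<partial>M) + (p - p\<^sup>2) * (\<integral>\<omega>. W i k \<omega> * W j k \<omega> \<partial>M)"
proof -
  txt \<open>Only the diagonal term sees \<open>E[hit k * hit l] = p\<close> instead of \<open>p\<^sup>2\<close>.\<close>
  define e where "e l = (\<integral>\<omega>. W i k \<omega> * W j l \<omega> \<partial>M)" for l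
  have "(\<lambda>l. e l * (if k = l then p else p\<^sup>2)) sums (\<integral>\<omega>. W i k \<omega> * hit k \<omega> * G j \<omega> \<partial>M)"
    unfolding e_def integral_sb_weights_mult_hits[OF i j, symmetric]
  proof (rule sums_integral_nonneg)
    show "AE \<omega> in M. (\<lambda>l. W i k \<omega> * W j l \<omega> * (hit k \<omega> * hit l \<omega>)) sums (W i k \<omega> * hit k \<omega> * G j \<omega>)"
      using G_sums[OF j]
    proof eventually_elim
      case (elim \<omega>)
      then have "(\<lambda>l. W i k \<omega> * hit k \<omega> * (W j l \<omega> * hit l \<omega>)) sums (W i k \<omega> * hit k \<omega> * G j \<omega>)"
        by (intro sums_mult) simp
      then show ?case
        by (simp add: mult_ac)
    qed
    show "integrable M (\<lambda>\<omega>. W i k \<omega> * hit k \<omega> * G j \<omega>)"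
    proof (rule integrable_unit_valued)
      show "AE \<omega> in M. 0 \<le> W i k \<omega> * hit k \<omega> * G j \<omega> \<and> W i k \<omega> * hit k \<omega> * G j \<omega> \<le> 1"
        using G_sums[OF j] AE_space
      proof eventually_elim
        case (elim \<omega>)
        then show ?case
          using sb_weight_bounds[OF i, of \<omega> k] hit_bounds[of k \<omega>] by (auto intro: mult_le_one)
      qed
    qed (use i j in measurable)
  qed (use i j sb_weight_bounds[OF i] sb_weight_bounds[OF j] hit_bounds in \<open>auto intro!: AE_I2\<close>)
  moreover have "(\<lambda>l. e l * (if k = l then p else p\<^sup>2)) sums
      (p\<^sup>2 * (\<integral>\<omega>. W i k \<omega> \<partial>M) + (p - p\<^sup>2) * e k)"
  proof -
    have "(\<lambda>l. p\<^sup>2 * e l + (if l = k then (p - p\<^sup>2) * e k else 0)) sums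
        (p\<^sup>2 * (\<integral>\<omega>. W i k \<omega> \<partial>M) + (p - p\<^sup>2) * e k)"
      unfolding e_def by (rule sums_add[OF sums_mult[OF sums_integral_sb_weight_mult[OF i j]] sums_single])
    moreover have "(\<lambda>l. p\<^sup>2 * e l + (if l = k then (p - p\<^sup>2) * e k else 0)) =
        (\<lambda>l. e l * (if k = l then p else p\<^sup>2))"
      by (simp add: fun_eq_iff algebra_simps)
    ultimately show ?thesis
      by (simp only:)
  qed
  ultimately show ?thesis
    unfolding e_def by (rule sums_unique2)
qed

lemma sums_integral_sb_weight_mult_same_atom:
  assumes i: "i \<in> {1..r}" and j: "j \<in> {1..r}"
  shows "(\<lambda>k. \<integral>\<omega>. W i k \<omega> * W j k \<omega> \<partial>M) sums
    ((\<integral>\<omega>. S i 0 \<omega> * S j 0 \<omega> \<partial>M) / (1 - (\<integral>\<omega>. (1 - S i 0 \<omega>) * (1 - S j 0 \<omega>) \<partial>M)))"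
proof -
  define q where "q = (\<integral>\<omega>. (1 - S i 0 \<omega>) * (1 - S j 0 \<omega>) \<partial>M)"
  have "0 \<le> q"
    unfolding q_def using S_bounds[OF i] S_bounds[OF j] by (intro integral_nonneg_AE AE_I2) auto
  then have "(\<lambda>k. q ^ k) sums (1 / (1 - q))"
    using integral_complements_mult_lt_1[OF i j] by (intro geometric_sums) (simp add: q_def)
  from sums_mult[OF this, of "\<integral>\<omega>. S i 0 \<omega> * S j 0 \<omega> \<partial>M"] show ?thesis
    by (simp add: integral_sb_weight_mult_same_atom[OF i j] q_def)
qed

lemma integral_G_mult:
  assumes i: "i \<in> {1..r}" and j: "j \<in> {1..r}"
  shows "(\<integral>\<omega>. G i \<omega> * G j \<omega> \<partial>M) = p\<^sup>2 + (p - p\<^sup>2) *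
    ((\<integral>\<omega>. S i 0 \<omega> * S j 0 \<omega> \<partial>M) / (1 - (\<integral>\<omega>. (1 - S i 0 \<omega>) * (1 - S j 0 \<omega>) \<partial>M)))"
proof -
  have "(\<lambda>k. \<integral>\<omega>. W i k \<omega> * hit k \<omega> * G j \<omega> \<partial>M) sums (\<integral>\<omega>. G i \<omega> * G j \<omega> \<partial>M)"
  proof (rule sums_integral_nonneg)
    show "AE \<omega> in M. (\<lambda>k. W i k \<omega> * hit k \<omega> * G j \<omega>) sums (G i \<omega> * G j \<omega>)"
      using G_sums[OF i] by eventually_elim (simp add: sums_mult2)
    show "AE \<omega> in M. 0 \<le> W i k \<omega> * hit k \<omega> * G j \<omega>" for k
      using G_sums[OF j] AE_space
    proof eventually_elim
      case (elim \<omega>)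
      then show ?case
        using sb_weight_bounds[OF i, of \<omega> k] hit_bounds[of k \<omega>] by simp
    qed
    show "integrable M (\<lambda>\<omega>. G i \<omega> * G j \<omega>)"
      by (rule integrable_G_mult[OF i j])
  qed (use i j in measurable)
  then have "(\<lambda>k. p\<^sup>2 * (\<integral>\<omega>. W i k \<omega> \<partial>M) + (p - p\<^sup>2) * (\<integral>\<omega>. W i k \<omega> * W j k \<omega> \<partial>M)) sums
      (\<integral>\<omega>. G i \<omega> * G j \<omega> \<partial>M)"
    by (simp only: integral_sb_weight_hit_G[OF i j])
  moreover have "(\<lambda>k. p\<^sup>2 * (\<integral>\<omega>. W i k \<omega> \<partial>M) + (p - p\<^sup>2) * (\<integral>\<omega>. W i k \<omega> * W j k \<omega> \<partial>M)) sums
      (p\<^sup>2 * 1 + (p - p\<^sup>2) *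
        ((\<integral>\<omega>. S i 0 \<omega> * S j 0 \<omega> \<partial>M) / (1 - (\<integral>\<omega>. (1 - S i 0 \<omega>) * (1 - S j 0 \<omega>) \<partial>M))))"
    by (rule sums_add[OF sums_mult[OF sums_integral_sb_weight[OF i]]
          sums_mult[OF sums_integral_sb_weight_mult_same_atom[OF i j]]])
  ultimately show ?thesis
    by (subst (asm) mult_1_right) (rule sums_unique2)
qed

lemma covar_G:
  assumes i: "i \<in> {1..r}" and j: "j \<in> {1..r}"
  shows "covar M (\<lambda>\<omega>. G i \<omega>) (\<lambda>\<omega>. G j \<omega>) =
    (p - p\<^sup>2) * ((\<integral>\<omega>. S i 0 \<omega> * S j 0 \<omega> \<partial>M) / (1 - (\<integral>\<omega>. (1 - S i 0 \<omega>) * (1 - S j 0 \<omega>) \<partial>M)))"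
  using covar_eq_integral_mult_diff[OF integrable_G[OF i] integrable_G[OF j] integrable_G_mult[OF i j]]
  by (simp add: integral_G[OF i] integral_G[OF j] integral_G_mult[OF i j] power2_eq_square)

lemma cor_G:
  assumes i: "i \<in> {1..r}" and j: "j \<in> {1..r}"
  shows "cor M (\<lambda>\<omega>. G i \<omega>) (\<lambda>\<omega>. G j \<omega>) =
     ((\<integral>\<omega>. S i 0 \<omega> * S j 0 \<omega> \<partial>M) / (1 - (\<integral>\<omega>. (1 - S i 0 \<omega>) * (1 - S j 0 \<omega>) \<partial>M)))
     * sqrt ((2 * (\<integral>\<omega>. S i 0 \<omega> \<partial>M) - (\<integral>\<omega>. (S i 0 \<omega>)\<^sup>2 \<partial>M))
             * (2 * (\<integral>\<omega>. S j 0 \<omega> \<partial>M) - (\<integral>\<omega>. (S j 0 \<omega>)\<^sup>2 \<partial>M))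
             / ((\<integral>\<omega>. (S i 0 \<omega>)\<^sup>2 \<partial>M) * (\<integral>\<omega>. (S j 0 \<omega>)\<^sup>2 \<partial>M)))"
proof -
  have variance: "covar M (\<lambda>\<omega>. G m \<omega>) (\<lambda>\<omega>. G m \<omega>) = (p - p\<^sup>2) *
      ((\<integral>\<omega>. (S m 0 \<omega>)\<^sup>2 \<partial>M) / (2 * (\<integral>\<omega>. S m 0 \<omega> \<partial>M) - (\<integral>\<omega>. (S m 0 \<omega>)\<^sup>2 \<partial>M)))"
    if m: "m \<in> {1..r}" for m
    using covar_G[OF m m] one_minus_integral_complement_sq[OF m] by (simp add: power2_eq_square)
  have denominator_pos: "0 < 2 * (\<integral>\<omega>. S m 0 \<omega> \<partial>M) - (\<integral>\<omega>. (S m 0 \<omega>)\<^sup>2 \<partial>M)"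
    if m: "m \<in> {1..r}" for m
    using integral_S_pos[OF m] integral_S_sq_le[OF m] by simp
  have "0 < p - p\<^sup>2"
    using A by (simp add: p_def power2_eq_square)
  then show ?thesis
    by (rule cor_eq_of_covar[OF covar_G[OF i j] variance[OF i] variance[OF j] _
          integral_S_sq_pos[OF i] integral_S_sq_pos[OF j] denominator_pos[OF i] denominator_pos[OF j]])
qed

end

theorem corollary1:
  fixes M :: "'a measure" and H0 :: "'x::polish_space measure"
    and r :: nat and S :: "nat \<Rightarrow> nat \<Rightarrow> 'a \<Rightarrow> real" and phi :: "nat \<Rightarrow> 'a \<Rightarrow> 'x"
    and A :: "'x set"
  assumes M: "prob_space M"
    and r: "r \<ge> 2"
    and H0: "prob_space H0" "sets H0 = sets borel"
    and phi_indep: "prob_space.indep_vars M (\<lambda>_. borel) phi UNIV"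
    and phi_law: "\<And>k. distr M borel (phi k) = H0"
    and S_range: "\<And>i k \<omega>. i \<in> {1..r} \<Longrightarrow> \<omega> \<in> space M \<Longrightarrow> S i k \<omega> \<in> {0..1}"
    and S_indep: "prob_space.indep_vars M (\<lambda>_. PiM {1..r} (\<lambda>_. borel))
                    (\<lambda>k \<omega>. restrict (\<lambda>i. S i k \<omega>) {1..r}) UNIV"
    and S_ident: "\<And>k. distr M (PiM {1..r} (\<lambda>_. borel)) (\<lambda>\<omega>. restrict (\<lambda>i. S i k \<omega>) {1..r})
                     = distr M (PiM {1..r} (\<lambda>_. borel)) (\<lambda>\<omega>. restrict (\<lambda>i. S i 0 \<omega>) {1..r})"
    and S_phi_indep: "prob_space.indep_set M
          {(\<lambda>\<omega> k. restrict (\<lambda>i. S i k \<omega>) {1..r}) -` B \<inter> space M | B.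
              B \<in> sets (PiM UNIV (\<lambda>_. PiM {1..r} (\<lambda>_. borel)))}
          {(\<lambda>\<omega> k. phi k \<omega>) -` B \<inter> space M | B. B \<in> sets (PiM UNIV (\<lambda>_. borel))}"
    and W_sum: "\<And>i. i \<in> {1..r} \<Longrightarrow> AE \<omega> in M. (\<lambda>k. sb_weight S i k \<omega>) sums 1"
    and A: "A \<in> sets borel" "0 < measure H0 A" "measure H0 A < 1"
  shows "cor M (\<lambda>\<omega>. G_meas S phi 1 \<omega> A) (\<lambda>\<omega>. G_meas S phi 2 \<omega> A) =
     (integral\<^sup>L M (\<lambda>\<omega>. S 1 0 \<omega> * S 2 0 \<omega>)
        / (1 - integral\<^sup>L M (\<lambda>\<omega>. (1 - S 1 0 \<omega>) * (1 - S 2 0 \<omega>))))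
     * sqrt ((2 * integral\<^sup>L M (S 1 0) - integral\<^sup>L M (\<lambda>\<omega>. (S 1 0 \<omega>)\<^sup>2))
             * (2 * integral\<^sup>L M (S 2 0) - integral\<^sup>L M (\<lambda>\<omega>. (S 2 0 \<omega>)\<^sup>2))
             / (integral\<^sup>L M (\<lambda>\<omega>. (S 1 0 \<omega>)\<^sup>2) * integral\<^sup>L M (\<lambda>\<omega>. (S 2 0 \<omega>)\<^sup>2)))"
proof -
  interpret common_atoms_stick_breaking M H0 r S phi A
    by (rule common_atoms_stick_breaking.intro) (fact assms)+
  show ?thesis
    using cor_G[of 1 2] r by simp
qed

end
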